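(* Let $S$ be a standard tableau of type $(i_1,\dots,i_m)$ and let $\widetilde Y_S:=\mathrm{pr}(Y_{\varphi(S)})$ be the corresponding irreducible component of the Spaltenstein variety $\mathrm{Sp}(i_1,\dots,i_m)$. Then $\widetilde Y_S$ consists of all partial flags $F_{i_1}\subset\dots\subset F_{i_m}$ of type $(i_1,\dots,i_m)$ whose subspaces satisfy: (1) for each $l$, $F_{i_l}\subset N^{-1}(F_{i_{l-1}})$; (2) if $i_l$ is in the top row of $S$, $i_l-1$ is in the bottom row and $i_l-1$ is not a double entry, then $F_{i_l}=N^{-1}(F_{i_l-2})$; (3) if $i_l$ and $i_l-1$ are both in the top row of $S$, then: if $F_{i_l-1}=N^{-d}(F_r)$ where $r$ is in the bottom row and not a double entry, then $F_{i_l}=N^{-d-1}(F_{r-1})$; and if $F_{i_l-1}=N^{-d}(\operatorname{im}N^{n-k-j})$ with $0\le j<n-2k$, then $F_{i_l}=N^{-d}(\operatorname{im}N^{n-k-j-1})$. Here $0$ is regarded as lying in the top row and $F_0=\{0\}=\operatorname{im}N^{n-k}$, $F_{i_0}=\{0\}$.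
   Context: Fix integers $n\ge 2k\ge 0$; $V$ is an $n$-dimensional complex vector space with basis $e_1,\dots,e_{n-k},f_1,\dots,f_k$ and $N$ is the nilpotent endomorphism $Ne_i=e_{i-1}$, $Nf_i=f_{i-1}$, $e_0=f_0=0$. $N^{-d}(U)$ denotes the preimage of $U$ under $N^d$. A partial flag of type $(i_1,\dots,i_m)$ ($0<i_1<\dots<i_m=n$) is a chain $F_{i_1}\subset\dots\subset F_{i_m}$ with $\dim F_{i_l}=i_l$; it is $N$-invariant if $NF_{i_l}\subset F_{i_{l-1}}$ ($F_{i_0}=\{0\}$). $\mathrm{Sp}(i_1,\dots,i_m)$ is the variety of $N$-invariant partial flags of that type; $Y=\mathrm{Sp}(1,\dots,n)$ is the Springer fibre; $\mathrm{pr}$ forgets the $F_j$ with $j\notin\{i_1,\dots,i_m\}$. Tableaux: a tableau of type $(i_1,\dots,i_m)$ is a two-row Young diagram (top row $n-k$ boxes, bottom row $k$ boxes) in which $i_l$ occurs exactly $i_l-i_{l-1}$ times; it is row strict if entries strictly decrease along rows, standard if moreover each column's top entry is $\ge$ its bottom entry. An entry $i_l$ with $i_l-i_{l-1}=2$ is a double entry (it appears in both rows). $\varphi(S)$ is obtained from $S$ by replacing the bottom-row copy of each double entry $i_l$ by $i_l-1$. For a standard tableau $\sigma$ of type $(1,\dots,n)$, $Y_\sigma$ is the irreducible component of $Y$ attached to $\sigma$ by the Spaltenstein–Vargas bijection; explicitly (Fung), with $F_0=\{0\}=\operatorname{im}N^{n-k}$ and $0$ in the top row, $Y_\sigma$ consists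 of the full flags with: $F_i\subset N^{-1}(F_{i-1})$ for all $i$; $F_i=N^{-1}(F_{i-2})$ if $i$ is in the top row and $i-1$ in the bottom row of $\sigma$; and if $i,i-1$ are both in the top row: $F_i=N^{-d-1}(F_{r-1})$ whenever $F_{i-1}=N^{-d}(F_r)$ with $r$ in the bottom row, and $F_i=N^{-d}(\operatorname{im}N^{n-k-j-1})$ whenever $F_{i-1}=N^{-d}(\operatorname{im}N^{n-k-j})$, $0\le j<n-2k$. *)

theory Defs
  imports Complex_Main "HOL-Library.Function_Algebras"
begin

text \<open>The basis vector e_i (1 <= i <= n-k) is the unit vector at index i-1, and
f_i (1 <= i <= k) is the unit vector at index n-k+i-1.\<close>

type_synonym vec = "nat \<Rightarrow> complex"

definition cscale :: "complex \<Rightarrow> vec \<Rightarrow> vec" where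
  "cscale c v = (\<lambda>i. c * v i)"

definition Vsp :: "nat \<Rightarrow> vec set" where
  "Vsp n = {v. \<forall>i\<ge>n. v i = 0}"

definition e_vec :: "nat \<Rightarrow> nat \<Rightarrow> vec" where
  "e_vec n i = (\<lambda>j. if j + 1 = i then 1 else 0)"

definition f_vec :: "nat \<Rightarrow> nat \<Rightarrow> nat \<Rightarrow> vec" where
  "f_vec n k i = (\<lambda>j. if j + 1 = n - k + i then 1 else 0)"

text \<open>N e_i = e_(i-1), N f_i = f_(i-1), e_0 = f_0 = 0, extended linearly:
the coefficient of e_(i-1) (resp. f_(i-1)) in N v is the coefficient of
e_i (resp. f_i) in v.\<close>

definition Nop :: "nat \<Rightarrow> nat \<Rightarrow> vec \<Rightarrow> vec" where
  "Nop n k v = (\<lambda>j. if j + 1 < n - k then v (j + 1)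
                     else if n - k \<le> j \<and> j + 1 < n then v (j + 1)
                     else 0)"

definition is_subspace :: "nat \<Rightarrow> vec set \<Rightarrow> bool" where
  "is_subspace n W \<longleftrightarrow> W \<subseteq> Vsp n \<and> module.subspace cscale W"

definition sdim :: "vec set \<Rightarrow> nat" where
  "sdim W = vector_space.dim cscale W"

definition Npre :: "nat \<Rightarrow> nat \<Rightarrow> nat \<Rightarrow> vec set \<Rightarrow> vec set" where
  "Npre n k d U = {v \<in> Vsp n. (Nop n k ^^ d) v \<in> U}"

definition Nim :: "nat \<Rightarrow> nat \<Rightarrow> nat \<Rightarrow> vec set" where
  "Nim n k j = (Nop n k ^^ j) ` Vsp n"

definition valid_type :: "nat \<Rightarrow> nat list \<Rightarrow> bool" where
  "valid_type n is \<longleftrightarrow> is \<noteq> [] \<and> sorted_wrt (<) is \<and> 0 < hd is \<and> last is = n"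

text \<open>prevt is (i_l) = i_(l-1), with i_0 = 0.\<close>
definition prevt :: "nat list \<Rightarrow> nat \<Rightarrow> nat" where
  "prevt is x = Max ({0} \<union> {y \<in> set is. y < x})"

definition full_type :: "nat \<Rightarrow> nat list" where
  "full_type n = [1..<n+1]"

text \<open>A partial flag of type is is a function G with G j = F_j for j in is,
G 0 = F_0 = {0}, and G j = {} (junk) at all other indices.\<close>
definition pflag :: "nat \<Rightarrow> nat list \<Rightarrow> (nat \<Rightarrow> vec set) \<Rightarrow> bool" where
  "pflag n is G \<longleftrightarrow>
     G 0 = {0} \<and>
     (\<forall>j\<in>set is. is_subspace n (G j) \<and> sdim (G j) = j) \<and>
     (\<forall>j\<in>set is. G (prevt is j) \<subseteq> G j) \<and>
     (\<forall>j. j \<notin> insert 0 (set is) \<longrightarrow> G j = {})"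

definition N_invariant :: "nat \<Rightarrow> nat \<Rightarrow> nat list \<Rightarrow> (nat \<Rightarrow> vec set) \<Rightarrow> bool" where
  "N_invariant n k is G \<longleftrightarrow> (\<forall>j\<in>set is. Nop n k ` G j \<subseteq> G (prevt is j))"

definition Sp :: "nat \<Rightarrow> nat \<Rightarrow> nat list \<Rightarrow> (nat \<Rightarrow> vec set) set" where
  "Sp n k is = {G. pflag n is G \<and> N_invariant n k is G}"

definition Springer :: "nat \<Rightarrow> nat \<Rightarrow> (nat \<Rightarrow> vec set) set" where
  "Springer n k = Sp n k (full_type n)"

definition pr :: "nat list \<Rightarrow> (nat \<Rightarrow> vec set) \<Rightarrow> (nat \<Rightarrow> vec set)" where
  "pr is F = (\<lambda>j. if j \<in> insert 0 (set is) then F j else {})"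

text \<open>A tableau is a pair (top row, bottom row), rows read left to right.\<close>
type_synonym tableau = "nat list \<times> nat list"

definition is_tableau :: "nat \<Rightarrow> nat \<Rightarrow> nat list \<Rightarrow> tableau \<Rightarrow> bool" where
  "is_tableau n k is S \<longleftrightarrow>
     length (fst S) = n - k \<and> length (snd S) = k \<and>
     set (fst S @ snd S) \<subseteq> set is \<and>
     (\<forall>x\<in>set is. count_list (fst S @ snd S) x = x - prevt is x)"

definition row_strict :: "tableau \<Rightarrow> bool" where
  "row_strict S \<longleftrightarrow> sorted_wrt (>) (fst S) \<and> sorted_wrt (>) (snd S)"

definition standard_tab :: "tableau \<Rightarrow> bool" where
  "standard_tab S \<longleftrightarrow> row_strict S \<and>
     (\<forall>j < length (snd S). snd S ! j \<le> fst S ! j)"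

definition in_top :: "tableau \<Rightarrow> nat \<Rightarrow> bool" where
  "in_top S x \<longleftrightarrow> x = 0 \<or> x \<in> set (fst S)"

definition in_bot :: "tableau \<Rightarrow> nat \<Rightarrow> bool" where
  "in_bot S x \<longleftrightarrow> x \<in> set (snd S)"

definition double_entry :: "nat list \<Rightarrow> nat \<Rightarrow> bool" where
  "double_entry is x \<longleftrightarrow> x \<in> set is \<and> x - prevt is x = 2"

definition phi :: "nat list \<Rightarrow> tableau \<Rightarrow> tableau" where
  "phi is S = (fst S, map (\<lambda>x. if double_entry is x then x - 1 else x) (snd S))"

section \<open>Components of the Springer fibre (Fung's description)\<close>

definition Ycomp :: "nat \<Rightarrow> nat \<Rightarrow> tableau \<Rightarrow> (nat \<Rightarrow> vec set) set" where
  "Ycomp n k \<sigma> = {F \<in> Springer n k. \<forall>i\<in>{1..n}.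
     F i \<subseteq> Npre n k 1 (F (i - 1)) \<and>
     (in_top \<sigma> i \<and> in_bot \<sigma> (i - 1) \<longrightarrow> F i = Npre n k 1 (F (i - 2))) \<and>
     (in_top \<sigma> i \<and> in_top \<sigma> (i - 1) \<longrightarrow>
        (\<forall>d r. in_bot \<sigma> r \<and> F (i - 1) = Npre n k d (F r) \<longrightarrow>
               F i = Npre n k (d + 1) (F (r - 1))) \<and>
        (\<forall>d j. j < n - 2 * k \<and> F (i - 1) = Npre n k d (Nim n k (n - k - j)) \<longrightarrow>
               F i = Npre n k d (Nim n k (n - k - j - 1))))}"

end

theory Submission
  imports Defs
begin

text \<open>The projection of a component of the Springer fibre satisfies the conditions because
  each of them is an instance of Fung's conditions for \<open>\<phi>(S)\<close>. Conversely, a partial flag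
  satisfying them lacks exactly the subspaces \<open>F\<^sub>x\<^sub>-\<^sub>1\<close> for the double entries \<open>x\<close>.
  For such \<open>x\<close> the conditions force \<open>F\<^sub>x = N\<^sup>-\<^sup>1(F\<^sub>x\<^sub>-\<^sub>2)\<close>, which has dimension
  \<open>dim F\<^sub>x\<^sub>-\<^sub>2 + 2\<close>, so the candidates for \<open>F\<^sub>x\<^sub>-\<^sub>1\<close> form a pencil of hyperplanes of
  \<open>F\<^sub>x\<close> through \<open>F\<^sub>x\<^sub>-\<^sub>2\<close>. Each instance of Fung's third condition that involves
  \<open>F\<^sub>x\<^sub>-\<^sub>1\<close> excludes at most finitely many members of the pencil, and a generic member
  turns it into the corresponding condition for \<open>S\<close>, with \<open>d + 1\<close> in place of \<open>d\<close>.
  The completed full flag therefore lies in \<open>Y\<^sub>\<phi>\<^sub>(\<^sub>S\<^sub>)\<close> and projects to the given one.\<close>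

section \<open>Types and standard tableaux\<close>

lemma valid_type_entry:
  assumes "valid_type n is" and "j \<in> set is"
  shows "0 < j" and "j \<le> n"
proof -
  from assms(1) obtain h t where "is = h # t" "0 < h" "\<forall>y\<in>set t. h < y"
    unfolding valid_type_def by (cases "is") auto
  then show "0 < j" using assms(2) by auto
  from assms(1) obtain ys where ys: "is = ys @ [n]"
    unfolding valid_type_def by (metis append_butlast_last_id)
  then have "\<forall>y\<in>set ys. y < n"
    using assms(1) unfolding valid_type_def by (simp add: sorted_wrt_append)
  then show "j \<le> n" using assms(2) ys by auto
qed

lemma last_in_type: "valid_type n is \<Longrightarrow> n \<in> set is"
  unfolding valid_type_def by auto

lemma prevt_mem: "prevt is j \<in> {0} \<union> {y \<in> set is. y < j}"
  unfolding prevt_def by (rule Max_in) auto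

lemma prevt_in_type: "prevt is j \<in> insert 0 (set is)"
  using prevt_mem by auto

lemma prevt_less: "0 < j \<Longrightarrow> prevt is j < j"
  using prevt_mem[of "is" j] by auto

lemma le_prevt: "y \<in> set is \<Longrightarrow> y < j \<Longrightarrow> y \<le> prevt is j"
  unfolding prevt_def by (rule Max_ge) auto

lemma set_full_type: "set (full_type n) = {1..n}"
  unfolding full_type_def by auto

lemma prevt_full_type:
  assumes "j \<in> {1..n}"
  shows "prevt (full_type n) j = j - 1"
proof -
  have "prevt (full_type n) j < j" using assms prevt_less by simp
  moreover have "j - 1 \<le> prevt (full_type n) j"
  proof (cases "j = 1")
    case False
    then show ?thesis using assms by (intro le_prevt) (auto simp: set_full_type)
  qed simp
  ultimately show ?thesis by linarith
qed

lemma double_entryD: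
  assumes "double_entry is x"
  shows "x \<in> set is" and "2 \<le> x" and "prevt is x = x - 2"
    and "x - 2 \<in> insert 0 (set is)" and "x - 1 \<notin> insert 0 (set is)"
proof -
  from assms show x: "x \<in> set is" and gap: "2 \<le> x" "prevt is x = x - 2"
    unfolding double_entry_def by auto
  then show "x - 2 \<in> insert 0 (set is)" using prevt_in_type[of "is" x] by simp
  show "x - 1 \<notin> insert 0 (set is)"
    using le_prevt[of "x - 1" "is" x] gap by auto
qed

lemma in_top_phi [simp]: "in_top (phi is S) x = in_top S x"
  unfolding in_top_def phi_def by simp

lemma in_bot_phi:
  "in_bot (phi is S) r \<longleftrightarrow> (\<exists>x\<in>set (snd S). r = (if double_entry is x then x - 1 else x))"
  unfolding in_bot_def phi_def by auto

locale standard_tableau =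
  fixes n k :: nat and "is" :: "nat list" and S :: tableau
  assumes two_k_le_n: "2 * k \<le> n"
    and valid: "valid_type n is"
    and tableau: "is_tableau n k is S"
    and standard: "standard_tab S"
begin

lemma entry_gap:
  assumes "x \<in> set is"
  shows "x - prevt is x = of_bool (x \<in> set (fst S)) + of_bool (x \<in> set (snd S))"
proof -
  have count_distinct: "count_list xs x = of_bool (x \<in> set xs)" if "sorted_wrt (>) xs" for xs
    using that by (induction xs) auto
  have "count_list (fst S @ snd S) x = x - prevt is x"
    using tableau assms unfolding is_tableau_def by blast
  then show ?thesis
    using standard count_distinct unfolding standard_tab_def row_strict_def by simp
qed

lemma in_bot_in_type: "in_bot S x \<Longrightarrow> x \<in> set is"
  using tableau unfolding is_tableau_def in_bot_def by auto

lemma in_top_in_type: "in_top S x \<Longrightarrow> x \<in> insert 0 (set is)"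
  using tableau unfolding is_tableau_def in_top_def by auto

lemma prevt_simple_entry:
  assumes "x \<in> set is" and "\<not> double_entry is x"
  shows "prevt is x = x - 1"
  using entry_gap[OF assms(1)] assms prevt_less[of x "is"] valid_type_entry[OF valid assms(1)]
  unfolding double_entry_def by (auto simp: of_bool_def split: if_splits)

lemma not_double_if_pred_in_top: "in_top S (i - 1) \<Longrightarrow> \<not> double_entry is i"
  using in_top_in_type double_entryD(5) by blast

lemma double_entry_Suc_if_missing:
  assumes j: "j \<in> {1..n}" "j \<notin> set is"
  shows "double_entry is (Suc j)"
proof -
  define y where "y = (LEAST y. y \<in> set is \<and> j < y)"
  have "n \<in> set is \<and> j < n"
    using last_in_type[OF valid] j by (metis atLeastAtMost_iff order_le_less)
  then have y: "y \<in> set is" "j < y"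
    using LeastI[of "\<lambda>y. y \<in> set is \<and> j < y"] unfolding y_def by auto
  have "prevt is y < j"
  proof (cases "prevt is y = 0")
    case False
    then have p: "prevt is y \<in> set is" using prevt_in_type[of "is" y] by simp
    then have "prevt is y \<noteq> j" using j by auto
    moreover have "\<not> j < prevt is y"
      using p prevt_less[of y "is"] y(2) Least_le[of "\<lambda>y. y \<in> set is \<and> j < y" "prevt is y"]
      unfolding y_def by auto
    ultimately show ?thesis by simp
  qed (use j in simp)
  moreover have "y - prevt is y \<le> 2" using entry_gap[OF y(1)] by simp
  ultimately have "y = Suc j" and "y - prevt is y = 2" using y(2) by auto
  then show ?thesis using y(1) unfolding double_entry_def by simp
qed

end

section \<open>Linear algebra in V\<close>

interpretation V: vector_space cscale
  by unfold_locales (auto simp: cscale_def algebra_simps fun_eq_iff)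

lemma cscale_apply [simp]: "cscale c v i = c * v i"
  by (simp add: cscale_def)

lemma is_subspace_iff: "is_subspace n W \<longleftrightarrow> W \<subseteq> Vsp n \<and> V.subspace W"
  unfolding is_subspace_def ..

lemma sdim_eq_dim: "sdim W = V.dim W"
  unfolding sdim_def ..

lemma subspace_Vsp: "V.subspace (Vsp n)"
  unfolding V.subspace_def Vsp_def by auto

lemma subspace_zero: "V.subspace {0}"
  unfolding V.subspace_def by auto

lemma dim_zero: "V.dim {0} = 0"
  using V.dim_eq_card[of "{}" "{0::vec}"] V.independent_empty by simp

lemma span_subspace_eq: "V.subspace A \<Longrightarrow> V.span A = A"
  by (simp add: V.span_eq_iff)

lemma mem_span_insert_subspace:
  "V.subspace A \<Longrightarrow> y \<in> V.span (insert x A) \<longleftrightarrow> (\<exists>t. y - cscale t x \<in> A)"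
  using V.span_breakdown_eq[of y x A] by (simp add: span_subspace_eq)

lemma mem_span_Un_subspaces:
  "V.subspace A \<Longrightarrow> V.subspace M \<Longrightarrow> y \<in> V.span (A \<union> M) \<longleftrightarrow> (\<exists>a\<in>A. \<exists>m\<in>M. y = a + m)"
  using V.span_Un[of A M] by (auto simp: span_subspace_eq)

definition unit_vec :: "nat \<Rightarrow> vec" where
  "unit_vec j = (\<lambda>i. if i = j then 1 else 0)"

lemma Vsp_subset_span_unit_vecs: "Vsp n \<subseteq> V.span (unit_vec ` {..<n})"
proof
  fix v assume v: "v \<in> Vsp n"
  have "v = (\<Sum>j<n. cscale (v j) (unit_vec j))"
  proof
    fix i
    have "(\<Sum>j<n. cscale (v j) (unit_vec j)) i = (\<Sum>j<n. v j * unit_vec j i)"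
      by (induction n) auto
    also have "\<dots> = v i"
      using v unfolding Vsp_def unit_vec_def by (cases "i < n") (auto simp: if_distrib cong: if_cong)
    finally show "v i = (\<Sum>j<n. cscale (v j) (unit_vec j)) i" by simp
  qed
  also have "\<dots> \<in> V.span (unit_vec ` {..<n})"
    by (intro V.span_sum V.span_scale V.span_base) auto
  finally show "v \<in> V.span (unit_vec ` {..<n})" .
qed

lemma finite_basis_in_Vsp:
  assumes "W \<subseteq> Vsp n"
  obtains B where "B \<subseteq> W" "V.independent B" "W \<subseteq> V.span B" "card B = V.dim W" "finite B"
proof -
  obtain B where B: "B \<subseteq> W" "V.independent B" "W \<subseteq> V.span B" "card B = V.dim W"
    using V.basis_exists by blast
  have "B \<subseteq> V.span (unit_vec ` {..<n})" using B(1) assms Vsp_subset_span_unit_vecs by blast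
  then have "finite B" using V.independent_span_bound[of "unit_vec ` {..<n}" B] B(2) by auto
  then show ?thesis using B that by blast
qed

lemma subspace_eq_if_dim_le:
  assumes U: "V.subspace U" and UW: "U \<subseteq> W" and W: "W \<subseteq> Vsp n"
    and dim: "V.dim W \<le> V.dim U"
  shows "U = W"
proof (rule ccontr)
  assume "U \<noteq> W"
  then obtain w where w: "w \<in> W" "w \<notin> U" using UW by blast
  obtain BU where BU: "BU \<subseteq> U" "V.independent BU" "U \<subseteq> V.span BU" "card BU = V.dim U" "finite BU"
    using finite_basis_in_Vsp[of U n] UW W by blast
  obtain BW where BW: "BW \<subseteq> W" "V.independent BW" "W \<subseteq> V.span BW" "card BW = V.dim W" "finite BW"
    using finite_basis_in_Vsp[OF W] by blast
  have "V.span BU = U" using V.span_minimal[OF BU(1) U] BU(3) by blast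
  then have w_new: "w \<notin> V.span BU" using w by simp
  have "card (insert w BU) \<le> card BW"
    using V.independent_span_bound[OF BW(5) V.independent_insertI[OF w_new BU(2)]] BU(1) UW w(1) BW(3)
    by auto
  moreover have "card (insert w BU) = card BU + 1"
    using BU(5) w_new V.span_superset[of BU] by (subst card_insert_disjoint) auto
  ultimately show False using BU(4) BW(4) dim by simp
qed

lemma dim_span_insert:
  assumes A: "A \<subseteq> Vsp n" and x: "x \<notin> V.span A"
  shows "V.dim (V.span (insert x A)) = V.dim A + 1"
proof -
  obtain B where B: "B \<subseteq> A" "V.independent B" "A \<subseteq> V.span B" "card B = V.dim A" "finite B"
    using finite_basis_in_Vsp[OF A] by blast
  have span_B: "V.span B = V.span A"
    using V.span_mono[OF B(1)] V.span_minimal[OF B(3) V.subspace_span] by blast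
  then have x_new: "x \<notin> V.span B" using x by simp
  have "V.span (insert x B) = V.span (insert x A)"
    by (simp only: V.span_insert span_B)
  then have "V.dim (V.span (insert x A)) = card (insert x B)"
    using V.dim_span_eq_card_independent[OF V.independent_insertI[OF x_new B(2)]] by simp
  also have "\<dots> = V.dim A + 1"
    using B(4,5) x_new V.span_superset[of B] by (subst card_insert_disjoint) auto
  finally show ?thesis .
qed

section \<open>The nilpotent operator N\<close>

lemma Nop_add: "Nop n k (x + y) = Nop n k x + Nop n k y"
  unfolding Nop_def by (auto simp: fun_eq_iff)

lemma Nop_scale: "Nop n k (cscale c x) = cscale c (Nop n k x)"
  unfolding Nop_def by (auto simp: fun_eq_iff)

lemma Npow_hom: "module_hom cscale cscale (Nop n k ^^ d)"
  unfolding module_hom_iff using V.module_axioms by (induction d) (simp_all add: Nop_add Nop_scale)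

lemmas Npow_diff = module_hom.diff[OF Npow_hom]
lemmas Npow_scale = module_hom.scale[OF Npow_hom]

lemma Nop_Vsp: "Nop n k v \<in> Vsp n"
  unfolding Nop_def Vsp_def by auto

lemma Npow_Vsp: "v \<in> Vsp n \<Longrightarrow> (Nop n k ^^ d) v \<in> Vsp n"
  by (induction d) (auto simp: Nop_Vsp)

lemma Npow_eq_0:
  assumes "v \<in> Vsp n" and "n \<le> d"
  shows "(Nop n k ^^ d) v = 0"
proof -
  have "(Nop n k ^^ d) v j = 0" if "n \<le> j + d" for j
    using that assms(1)
  proof (induction d arbitrary: j)
    case (Suc d)
    then show ?case using Suc.IH[of "j + 1"] by (simp add: Nop_def)
  qed (simp add: Vsp_def)
  then show ?thesis using assms(2) by auto
qed

lemma Npre_Vsp: "Npre n k d U \<subseteq> Vsp n"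
  unfolding Npre_def by auto

lemma Npre_mono: "U \<subseteq> W \<Longrightarrow> Npre n k d U \<subseteq> Npre n k d W"
  unfolding Npre_def by auto

lemma Npre_Npre: "Npre n k 1 (Npre n k d U) = Npre n k (Suc d) U"
  unfolding Npre_def by (auto simp: Nop_Vsp funpow_Suc_right simp del: funpow.simps)

lemma subspace_Npre:
  assumes "V.subspace U"
  shows "V.subspace (Npre n k d U)"
proof -
  have "Npre n k d U = Vsp n \<inter> (Nop n k ^^ d) -` U"
    unfolding Npre_def by auto
  then show ?thesis
    using V.subspace_inter[OF subspace_Vsp module_hom.subspace_vimage[OF Npow_hom assms]] by simp
qed

lemma subspace_Nim: "V.subspace (Nim n k d)"
  unfolding Nim_def using module_hom.subspace_image[OF Npow_hom subspace_Vsp] .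

lemma Npre_eq_Vsp_if_ge:
  assumes "V.subspace U" and "n \<le> d"
  shows "Npre n k d U = Vsp n"
  using Npow_eq_0[OF _ assms(2)] V.subspace_0[OF assms(1)] unfolding Npre_def by auto

text \<open>A right inverse of N away from its kernel, which is spanned by the unit
  vectors at indices \<open>0\<close> and \<open>n - k\<close>, the first vectors of the two Jordan blocks.\<close>

definition Nshift :: "nat \<Rightarrow> nat \<Rightarrow> vec \<Rightarrow> vec" where
  "Nshift n k w = (\<lambda>j. if j = 0 \<or> j = n - k \<or> n \<le> j then 0 else w (j - 1))"

lemma Nshift_hom: "module_hom cscale cscale (Nshift n k)"
  unfolding module_hom_iff using V.module_axioms by (auto simp: Nshift_def fun_eq_iff)

lemma Nshift_Nop_decomp:
  assumes "v \<in> Vsp n" and "0 < n - k"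
  shows "v = Nshift n k (Nop n k v) + cscale (v 0) (unit_vec 0) + cscale (v (n - k)) (unit_vec (n - k))"
proof
  fix j
  show "v j = (Nshift n k (Nop n k v) + cscale (v 0) (unit_vec 0) + cscale (v (n - k)) (unit_vec (n - k))) j"
    using assms unfolding Vsp_def Nshift_def unit_vec_def Nop_def
    by (cases "n \<le> j"; cases "j = 0"; cases "j = n - k") auto
qed

lemma dim_Npre1_le:
  assumes A: "A \<subseteq> Vsp n" and "0 < n - k"
  shows "V.dim (Npre n k 1 A) \<le> V.dim A + 2"
proof -
  obtain B where B: "B \<subseteq> A" "V.independent B" "A \<subseteq> V.span B" "card B = V.dim A" "finite B"
    using finite_basis_in_Vsp[OF A] by blast
  let ?T = "Nshift n k ` B \<union> {unit_vec 0, unit_vec (n - k)}"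
  have "Npre n k 1 A \<subseteq> V.span ?T"
  proof
    fix v assume "v \<in> Npre n k 1 A"
    then have v: "v \<in> Vsp n" "Nop n k v \<in> A" unfolding Npre_def by auto
    have "Nshift n k (Nop n k v) \<in> Nshift n k ` V.span B" using v(2) B(3) by blast
    also have "\<dots> = V.span (Nshift n k ` B)" using module_hom.span_image[OF Nshift_hom] by simp
    also have "\<dots> \<subseteq> V.span ?T" by (rule V.span_mono) auto
    finally have "Nshift n k (Nop n k v) \<in> V.span ?T" .
    then have "Nshift n k (Nop n k v) + cscale (v 0) (unit_vec 0)
        + cscale (v (n - k)) (unit_vec (n - k)) \<in> V.span ?T"
      by (intro V.span_add[OF V.span_add] V.span_scale[OF V.span_base]) auto
    then show "v \<in> V.span ?T" using Nshift_Nop_decomp[OF v(1) assms(2)] by simp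
  qed
  then have "V.dim (Npre n k 1 A) \<le> card ?T" using V.dim_le_card B(5) by blast
  also have "\<dots> \<le> card (Nshift n k ` B) + card {unit_vec 0, unit_vec (n - k)}"
    by (rule card_Un_le)
  also have "\<dots> \<le> card B + 2"
    using card_image_le[OF B(5), of "Nshift n k"] by (simp add: card_insert_if)
  finally show ?thesis using B(4) by simp
qed

section \<open>A generic intermediate subspace\<close>

lemma spanning_pair_of_codim_two:
  assumes A: "V.subspace A" "A \<subseteq> Vsp n"
    and B: "V.subspace B" "A \<subseteq> B" "B \<subseteq> Vsp n" "V.dim B = V.dim A + 2"
  obtains u w where "u \<in> B" "w \<in> B" "B \<subseteq> V.span (insert w (insert u A))"
    "\<And>\<alpha> \<beta>. cscale \<alpha> u + cscale \<beta> w \<in> A \<Longrightarrow> \<alpha> = 0 \<and> \<beta> = 0"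
proof -
  have "A \<noteq> B" using B(4) by auto
  then obtain u where u: "u \<in> B" "u \<notin> A" using B(2) by blast
  let ?A1 = "V.span (insert u A)"
  have dim_A1: "V.dim ?A1 = V.dim A + 1"
    using dim_span_insert[OF A(2)] u(2) span_subspace_eq[OF A(1)] by simp
  have A1_B: "?A1 \<subseteq> B" using V.span_minimal[of "insert u A" B] u(1) B(1,2) by blast
  have "?A1 \<noteq> B" using B(4) dim_A1 by auto
  then obtain w where w: "w \<in> B" "w \<notin> ?A1" using A1_B by blast
  let ?A2 = "V.span (insert w (insert u A))"
  have "insert u A \<subseteq> Vsp n" using u(1) B(2,3) by blast
  then have "V.dim ?A2 = V.dim A + 2" using dim_span_insert[of "insert u A" n w] w(2) dim_A1 by simp
  moreover have "?A2 \<subseteq> B" using V.span_minimal[of "insert w (insert u A)" B] u(1) w(1) B(1,2) by blast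
  ultimately have "?A2 = B" using subspace_eq_if_dim_le[OF V.subspace_span _ B(3)] B(4) by simp
  moreover have "\<alpha> = 0 \<and> \<beta> = 0" if a: "cscale \<alpha> u + cscale \<beta> w \<in> A" for \<alpha> \<beta>
  proof (cases "\<beta> = 0")
    case True
    then have "cscale \<alpha> u + cscale \<beta> w = cscale \<alpha> u" by (simp add: fun_eq_iff)
    then have "cscale \<alpha> u \<in> A" using a by metis
    then show ?thesis
      using u(2) True V.subspace_scale[OF A(1), of "cscale \<alpha> u" "inverse \<alpha>"]
      by (cases "\<alpha> = 0") (auto simp: V.scale_scale)
  next
    case False
    have "w = cscale (inverse \<beta>) (cscale \<alpha> u + cscale \<beta> w) - cscale (inverse \<beta> * \<alpha>) u"
      using False by (simp add: fun_eq_iff field_simps)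
    also have "\<dots> \<in> ?A1"
      using a by (intro V.span_diff V.span_scale V.span_base) auto
    finally show ?thesis using w(2) by simp
  qed
  ultimately show thesis using that u(1) w(1) by blast
qed

lemma pencil_in_subspace_or_finite:
  assumes "V.subspace E"
  shows "(u \<in> E \<and> w \<in> E) \<or> finite {c. u + cscale c w \<in> E}"
proof (rule disjCI)
  assume inf: "infinite {c. u + cscale c w \<in> E}"
  then obtain c1 where c1: "u + cscale c1 w \<in> E" using not_finite_existsD by blast
  from inf have "infinite ({c. u + cscale c w \<in> E} - {c1})" by simp
  then obtain c2 where "c2 \<in> {c. u + cscale c w \<in> E} - {c1}" using infinite_imp_nonempty by blast
  then have c: "c1 \<noteq> c2" "u + cscale c1 w \<in> E" "u + cscale c2 w \<in> E" using c1 by auto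
  have "(u + cscale c1 w) - (u + cscale c2 w) = cscale (c1 - c2) w"
    by (simp add: fun_eq_iff algebra_simps)
  then have "w = cscale (inverse (c1 - c2)) ((u + cscale c1 w) - (u + cscale c2 w))"
    using c(1) by (simp add: V.scale_scale)
  also have "\<dots> \<in> E" by (intro V.subspace_scale[OF assms] V.subspace_diff[OF assms] c(2,3))
  finally have w: "w \<in> E" .
  have "u = (u + cscale c1 w) - cscale c1 w" by simp
  also have "\<dots> \<in> E" by (intro V.subspace_scale[OF assms] V.subspace_diff[OF assms] c(2) w)
  finally have "u \<in> E" .
  with w show "u \<in> E \<and> w \<in> E" by blast
qed

lemma pencil_span_inj:
  assumes A: "V.subspace A"
    and indep: "\<And>\<alpha> \<beta>. cscale \<alpha> u + cscale \<beta> w \<in> A \<Longrightarrow> \<alpha> = 0 \<and> \<beta> = 0"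
    and eq: "V.span (insert (u + cscale c1 w) A) = V.span (insert (u + cscale c2 w) A)"
  shows "c1 = c2"
proof -
  have "u + cscale c1 w \<in> V.span (insert (u + cscale c2 w) A)"
    using eq V.span_base by blast
  then obtain t where "u + cscale c1 w - cscale t (u + cscale c2 w) \<in> A"
    using mem_span_insert_subspace[OF A] by blast
  moreover have "u + cscale c1 w - cscale t (u + cscale c2 w) = cscale (1 - t) u + cscale (c1 - t * c2) w"
    by (simp add: fun_eq_iff algebra_simps)
  ultimately have "1 - t = 0 \<and> c1 - t * c2 = 0" using indep[of "1 - t" "c1 - t * c2"] by simp
  then show ?thesis by simp
qed

lemma Npre_span_insert_eq:
  assumes A: "V.subspace A" and x: "x \<notin> V.span (A \<union> Nim n k d)"
  shows "Npre n k d (V.span (insert x A)) = Npre n k d A"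
proof
  show "Npre n k d A \<subseteq> Npre n k d (V.span (insert x A))"
    using V.span_superset[of "insert x A"] by (intro Npre_mono) blast
  show "Npre n k d (V.span (insert x A)) \<subseteq> Npre n k d A"
  proof
    fix v assume "v \<in> Npre n k d (V.span (insert x A))"
    then have v: "v \<in> Vsp n" "(Nop n k ^^ d) v \<in> V.span (insert x A)" unfolding Npre_def by auto
    then obtain t where t: "(Nop n k ^^ d) v - cscale t x \<in> A"
      using mem_span_insert_subspace[OF A] by blast
    have "t = 0"
    proof (rule ccontr)
      assume "t \<noteq> 0"
      then have "x = cscale (inverse t) ((Nop n k ^^ d) v) - cscale (inverse t) ((Nop n k ^^ d) v - cscale t x)"
        by (simp add: fun_eq_iff field_simps)
      also have "\<dots> \<in> V.span (A \<union> Nim n k d)"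
        using t v(1) unfolding Nim_def by (intro V.span_diff V.span_scale V.span_base) auto
      finally show False using x by simp
    qed
    then show "v \<in> Npre n k d A" using t v(1) unfolding Npre_def by simp
  qed
qed

lemma subset_if_Npre_subset:
  assumes A: "V.subspace A" "A \<subseteq> X" "A \<subseteq> X'"
    and X: "V.subspace X" "X \<subseteq> V.span (A \<union> Nim n k d)" and X': "V.subspace X'"
    and sub: "Npre n k d X \<subseteq> Npre n k d X'"
  shows "X \<subseteq> X'"
proof
  fix v assume v: "v \<in> X"
  then obtain a m where am: "a \<in> A" "m \<in> Nim n k d" "v = a + m"
    using X(2) mem_span_Un_subspaces[OF A(1) subspace_Nim] by blast
  then obtain z where z: "z \<in> Vsp n" "m = (Nop n k ^^ d) z" unfolding Nim_def by blast
  have "m \<in> X" using am v A(2) V.subspace_diff[OF X(1)] by force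
  then have "z \<in> Npre n k d X'" using z sub unfolding Npre_def by blast
  then have "m \<in> X'" using z unfolding Npre_def by simp
  then show "v \<in> X'" using am A(3) V.subspace_add[OF X'] by blast
qed

lemma eq_span_insert_if_codim_one:
  assumes A: "V.subspace A" "A \<subseteq> D" and D: "V.subspace D" "D \<subseteq> B" "D \<noteq> B"
    and B: "B \<subseteq> Vsp n" "V.dim B \<le> V.dim A + 2"
    and y: "y \<in> D" "y \<notin> A"
  shows "D = V.span (insert y A)"
proof -
  have D_Vsp: "D \<subseteq> Vsp n" using D(2) B(1) by blast
  have "V.dim D < V.dim B" using subspace_eq_if_dim_le[OF D(1,2) B(1)] D(3) by force
  moreover have "V.dim (V.span (insert y A)) = V.dim A + 1"
    using dim_span_insert[of A n y] A D_Vsp y(2) span_subspace_eq[OF A(1)] by auto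
  ultimately have le: "V.dim D \<le> V.dim (V.span (insert y A))" using B(2) by linarith
  have "V.span (insert y A) \<subseteq> D" using V.span_minimal[OF _ D(1)] A(2) y(1) by blast
  then show ?thesis using subspace_eq_if_dim_le[OF V.subspace_span _ D_Vsp le] by simp
qed

lemma Npre_Suc_eq_if_not_in_image_sum:
  assumes A: "V.subspace A" "A \<subseteq> Npre n k 1 A" "V.dim (Npre n k 1 A) = V.dim A + 2"
    and not_sub: "\<not> Npre n k 1 A \<subseteq> V.span (A \<union> Nim n k d)"
    and H: "V.subspace H" "Npre n k d A \<subset> H" "H \<subseteq> Npre n k (Suc d) A"
  shows "H = Npre n k (Suc d) A"
proof
  define D where "D = Npre n k 1 A \<inter> V.span (A \<union> Nim n k d)"
  have D_sub: "V.subspace D"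
    unfolding D_def by (rule V.subspace_inter[OF subspace_Npre[OF A(1)] V.subspace_span])
  have A_D: "A \<subseteq> D" unfolding D_def using A(2) V.span_superset[of "A \<union> Nim n k d"] by blast
  have D_B: "D \<subseteq> Npre n k 1 A" "D \<noteq> Npre n k 1 A" unfolding D_def using not_sub by blast+
  have Npow_in_D: "(Nop n k ^^ d) v \<in> D" if "v \<in> Npre n k (Suc d) A" for v
  proof -
    from that have v: "v \<in> Vsp n" "Nop n k ((Nop n k ^^ d) v) \<in> A" unfolding Npre_def by auto
    then have "(Nop n k ^^ d) v \<in> Nim n k d" unfolding Nim_def by blast
    then show ?thesis using v Npow_Vsp unfolding D_def Npre_def by (auto intro: V.span_base)
  qed
  obtain z where z: "z \<in> H" "z \<notin> Npre n k d A" using H(2) by blast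
  have z_Vsp: "z \<in> Vsp n" using z(1) H(3) Npre_Vsp by blast
  have "(Nop n k ^^ d) z \<notin> A" using z(2) z_Vsp unfolding Npre_def by blast
  moreover have "(Nop n k ^^ d) z \<in> D" using Npow_in_D z(1) H(3) by blast
  moreover have "V.dim (Npre n k 1 A) \<le> V.dim A + 2" using A(3) by simp
  ultimately have D_eq: "D = V.span (insert ((Nop n k ^^ d) z) A)"
    using eq_span_insert_if_codim_one[OF A(1) A_D D_sub D_B Npre_Vsp] by blast
  show "Npre n k (Suc d) A \<subseteq> H"
  proof
    fix v assume v: "v \<in> Npre n k (Suc d) A"
    then obtain t where t: "(Nop n k ^^ d) v - cscale t ((Nop n k ^^ d) z) \<in> A"
      using Npow_in_D[OF v] D_eq mem_span_insert_subspace[OF A(1)] by blast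
    have "v - cscale t z \<in> Vsp n"
      using v z_Vsp Npre_Vsp V.subspace_diff[OF subspace_Vsp] V.subspace_scale[OF subspace_Vsp] by blast
    then have "v - cscale t z \<in> Npre n k d A" using t unfolding Npre_def by (simp add: Npow_diff Npow_scale)
    then have "v - cscale t z \<in> H" using H(2) by blast
    then have "(v - cscale t z) + cscale t z \<in> H"
      using V.subspace_add[OF H(1)] V.subspace_scale[OF H(1) z(1)] by blast
    then show "v \<in> H" by simp
  qed
qed (use H in simp)

lemma inj_Npre_pencil:
  assumes A: "V.subspace A"
    and indep: "\<And>\<alpha> \<beta>. cscale \<alpha> u + cscale \<beta> w \<in> A \<Longrightarrow> \<alpha> = 0 \<and> \<beta> = 0"
    and uw: "u \<in> V.span (A \<union> Nim n k d)" "w \<in> V.span (A \<union> Nim n k d)"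
  shows "inj (\<lambda>c. Npre n k d (V.span (insert (u + cscale c w) A)))"
proof (rule injI)
  let ?X = "\<lambda>c. V.span (insert (u + cscale c w) A)"
  have A_E: "A \<subseteq> V.span (A \<union> Nim n k d)" using V.span_superset[of "A \<union> Nim n k d"] by blast
  have "u + cscale c w \<in> V.span (A \<union> Nim n k d)" for c by (rule V.span_add[OF uw(1) V.span_scale[OF uw(2)]])
  then have X_E: "?X c \<subseteq> V.span (A \<union> Nim n k d)" for c
    using A_E by (intro V.span_minimal[OF _ V.subspace_span]) auto
  have A_X: "A \<subseteq> ?X c" for c using V.span_superset by blast
  fix c1 c2 assume eq: "Npre n k d (?X c1) = Npre n k d (?X c2)"
  have "?X c1 \<subseteq> ?X c2"
    using subset_if_Npre_subset[OF A A_X A_X V.subspace_span X_E V.subspace_span] eq by simp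
  moreover have "?X c2 \<subseteq> ?X c1"
    using subset_if_Npre_subset[OF A A_X A_X V.subspace_span X_E V.subspace_span] eq by simp
  ultimately have "?X c1 = ?X c2" by (rule subset_antisym)
  then show "c1 = c2" using pencil_span_inj[OF A indep] by blast
qed

text \<open>Either the pencil lies in \<open>A + im N\<^sup>d\<close>, and then distinct members have distinct
  preimages under \<open>N\<^sup>d\<close>, or all but finitely many members \<open>X\<close> miss \<open>A + im N\<^sup>d\<close>, and then
  \<open>N\<^sup>-\<^sup>d(X) = N\<^sup>-\<^sup>d(A)\<close>.\<close>

lemma finite_bad_pencil_members:
  assumes A: "V.subspace A" "A \<subseteq> Npre n k 1 A" "V.dim (Npre n k 1 A) = V.dim A + 2"
    and uw: "u \<in> Npre n k 1 A" "w \<in> Npre n k 1 A" "Npre n k 1 A \<subseteq> V.span (insert w (insert u A))"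
    and indep: "\<And>\<alpha> \<beta>. cscale \<alpha> u + cscale \<beta> w \<in> A \<Longrightarrow> \<alpha> = 0 \<and> \<beta> = 0"
    and H: "V.subspace H'" "H \<subset> H'" "H' \<subseteq> Npre n k 1 H"
  shows "finite {c. H = Npre n k d (V.span (insert (u + cscale c w) A)) \<and> H' \<noteq> Npre n k (Suc d) A}"
    (is "finite ?bad")
proof -
  let ?E = "V.span (A \<union> Nim n k d)"
  consider "u \<in> ?E" "w \<in> ?E" | "finite {c. u + cscale c w \<in> ?E}"
    using pencil_in_subspace_or_finite[OF V.subspace_span] by blast
  then show ?thesis
  proof cases
    case 1
    then have "finite ((\<lambda>c. Npre n k d (V.span (insert (u + cscale c w) A))) -` {H})"
      by (intro finite_vimageI inj_Npre_pencil[OF A(1) indep]) auto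
    then show ?thesis by (rule finite_subset[rotated]) auto
  next
    case 2
    have "?bad \<subseteq> {c. u + cscale c w \<in> ?E}"
    proof
      fix c assume c: "c \<in> ?bad"
      show "c \<in> {c. u + cscale c w \<in> ?E}"
      proof (rule ccontr)
        assume c_E: "c \<notin> {c. u + cscale c w \<in> ?E}"
        then have H_eq: "H = Npre n k d A" using c Npre_span_insert_eq[OF A(1)] by auto
        have "u + cscale c w \<in> Npre n k 1 A"
          by (rule V.subspace_add[OF subspace_Npre[OF A(1)] uw(1) V.subspace_scale[OF subspace_Npre[OF A(1)] uw(2)]])
        then have "\<not> Npre n k 1 A \<subseteq> ?E" using c_E by blast
        moreover have "H' \<subseteq> Npre n k (Suc d) A" using H(3) H_eq Npre_Npre by simp
        ultimately have "H' = Npre n k (Suc d) A"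
          using Npre_Suc_eq_if_not_in_image_sum[OF A] H(1,2) H_eq by simp
        then show False using c by simp
      qed
    qed
    then show ?thesis using 2 by (rule finite_subset)
  qed
qed

lemma generic_intermediate_subspace:
  assumes A: "V.subspace A" "A \<subseteq> Vsp n" "A \<subseteq> Npre n k 1 A" "V.dim (Npre n k 1 A) = V.dim A + 2"
    and I: "finite I"
    and H: "\<And>i. i \<in> I \<Longrightarrow> V.subspace (H' i) \<and> H i \<subset> H' i \<and> H' i \<subseteq> Npre n k 1 (H i)"
  obtains X where "V.subspace X" "A \<subseteq> X" "X \<subseteq> Npre n k 1 A" "V.dim X = V.dim A + 1"
    "\<And>i d. i \<in> I \<Longrightarrow> H i = Npre n k d X \<Longrightarrow> H' i = Npre n k (Suc d) A"
proof -
  obtain u w where uw: "u \<in> Npre n k 1 A" "w \<in> Npre n k 1 A" "Npre n k 1 A \<subseteq> V.span (insert w (insert u A))"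
    and indep: "\<And>\<alpha> \<beta>. cscale \<alpha> u + cscale \<beta> w \<in> A \<Longrightarrow> \<alpha> = 0 \<and> \<beta> = 0"
    using spanning_pair_of_codim_two[OF A(1,2) subspace_Npre[OF A(1)] A(3) Npre_Vsp A(4)] by blast
  define X where "X c = V.span (insert (u + cscale c w) A)" for c
  define bad where "bad i d = {c. H i = Npre n k d (X c) \<and> H' i \<noteq> Npre n k (Suc d) A}" for i d
  have "finite (\<Union>i\<in>I. \<Union>d<n. bad i d)"
    using I finite_bad_pencil_members[OF A(1,3,4) uw indep] H unfolding bad_def X_def by simp
  then obtain c where c: "c \<notin> (\<Union>i\<in>I. \<Union>d<n. bad i d)"
    using ex_new_if_finite[OF infinite_UNIV_char_0] by blast
  have "u + cscale c w \<in> Npre n k 1 A"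
    by (rule V.subspace_add[OF subspace_Npre[OF A(1)] uw(1) V.subspace_scale[OF subspace_Npre[OF A(1)] uw(2)]])
  then have X_B: "X c \<subseteq> Npre n k 1 A"
    unfolding X_def using A(3) by (intro V.span_minimal subspace_Npre[OF A(1)]) auto
  have "u + cscale c w \<notin> A" using indep[of 1 c] V.scale_one[of u] by auto
  then have dim_X: "V.dim (X c) = V.dim A + 1"
    unfolding X_def using dim_span_insert[OF A(2)] span_subspace_eq[OF A(1)] by simp
  show thesis
  proof (rule that[OF _ _ X_B dim_X])
    show "V.subspace (X c)" "A \<subseteq> X c" unfolding X_def by (auto intro: V.span_base)
  next
    fix i d assume i: "i \<in> I" and Hi: "H i = Npre n k d (X c)"
    show "H' i = Npre n k (Suc d) A"
    proof (cases "d < n")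
      case False
      then have "H i = Vsp n" using Hi Npre_eq_Vsp_if_ge[OF V.subspace_span] unfolding X_def by simp
      then show ?thesis using H[OF i] Npre_Vsp by blast
    qed (use c i Hi in \<open>auto simp: bad_def\<close>)
  qed
qed

section \<open>Partial flags and the Fung conditions\<close>

lemma pflag_dims:
  assumes "pflag n is G" and "j \<in> insert 0 (set is)"
  shows "V.subspace (G j)" and "G j \<subseteq> Vsp n" and "V.dim (G j) = j"
proof -
  have "V.subspace (G j) \<and> G j \<subseteq> Vsp n \<and> V.dim (G j) = j"
  proof (cases "j = 0")
    case True
    then show ?thesis using assms(1) subspace_zero dim_zero unfolding pflag_def Vsp_def by auto
  next
    case False
    then show ?thesis using assms unfolding pflag_def is_subspace_iff sdim_eq_dim by auto
  qed
  then show "V.subspace (G j)" "G j \<subseteq> Vsp n" "V.dim (G j) = j" by auto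
qed

lemma pflag_prevt_subset: "pflag n is G \<Longrightarrow> j \<in> set is \<Longrightarrow> G (prevt is j) \<subseteq> G j"
  unfolding pflag_def by blast

lemma pflag_junk: "pflag n is G \<Longrightarrow> j \<notin> insert 0 (set is) \<Longrightarrow> G j = {}"
  unfolding pflag_def by blast

lemma pr_eq: "j \<in> insert 0 (set is) \<Longrightarrow> pr is F j = F j"
  unfolding pr_def by simp

lemma Springer_mono:
  assumes F: "F \<in> Springer n k" and "a \<le> b" and "b \<le> n"
  shows "F a \<subseteq> F b"
  using assms(2,3)
proof (induction b)
  case (Suc b)
  have "F (prevt (full_type n) (Suc b)) \<subseteq> F (Suc b)"
    using F Suc.prems unfolding Springer_def Sp_def pflag_def set_full_type by auto
  then have "F b \<subseteq> F (Suc b)" using prevt_full_type[of "Suc b" n] Suc.prems by simp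
  then show ?case using Suc by (cases "a = Suc b") auto
qed simp

lemma pflag_pr_Springer:
  assumes "valid_type n is" and F: "F \<in> Springer n k"
  shows "pflag n is (pr is F)"
proof -
  have F_pflag: "pflag n (full_type n) F" using F unfolding Springer_def Sp_def by blast
  have entry: "j \<in> {1..n}" if "j \<in> set is" for j using valid_type_entry[OF assms(1) that] by auto
  show ?thesis
    unfolding pflag_def
  proof (intro conjI ballI allI impI)
    show "pr is F 0 = {0}" using F_pflag unfolding pflag_def pr_def by simp
  next
    fix j assume j: "j \<in> set is"
    then show "is_subspace n (pr is F j)" "sdim (pr is F j) = j"
      using F_pflag entry[OF j] unfolding pflag_def pr_def set_full_type by auto
    show "pr is F (prevt is j) \<subseteq> pr is F j"
      using Springer_mono[OF F] prevt_less[of j "is"] prevt_in_type[of "is" j] entry[OF j] j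
      unfolding pr_def by auto
  next
    fix j assume "j \<notin> insert 0 (set is)"
    then show "pr is F j = {}" unfolding pr_def by simp
  qed
qed

definition fung_flags :: "nat \<Rightarrow> nat \<Rightarrow> nat list \<Rightarrow> tableau \<Rightarrow> (nat \<Rightarrow> vec set) set" where
  "fung_flags n k is S = {G. pflag n is G \<and>
        (\<forall>i\<in>set is. G i \<subseteq> Npre n k 1 (G (prevt is i))) \<and>
        (\<forall>i\<in>set is. in_top S i \<and> in_bot S (i - 1) \<and> \<not> double_entry is (i - 1) \<longrightarrow>
             G i = Npre n k 1 (G (i - 2))) \<and>
        (\<forall>i\<in>set is. in_top S i \<and> in_top S (i - 1) \<longrightarrow>
             (\<forall>d r. in_bot S r \<and> \<not> double_entry is r \<and> G (i - 1) = Npre n k d (G r) \<longrightarrow>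
                    G i = Npre n k (d + 1) (G (r - 1))) \<and>
             (\<forall>d j. j < n - 2 * k \<and> G (i - 1) = Npre n k d (Nim n k (n - k - j)) \<longrightarrow>
                    G i = Npre n k d (Nim n k (n - k - j - 1))))}"

lemma fung_flagsD:
  assumes "G \<in> fung_flags n k is S"
  shows "pflag n is G"
    and "i \<in> set is \<Longrightarrow> G i \<subseteq> Npre n k 1 (G (prevt is i))"
    and "i \<in> set is \<Longrightarrow> in_top S i \<Longrightarrow> in_bot S (i - 1) \<Longrightarrow> \<not> double_entry is (i - 1) \<Longrightarrow>
      G i = Npre n k 1 (G (i - 2))"
    and "i \<in> set is \<Longrightarrow> in_top S i \<Longrightarrow> in_top S (i - 1) \<Longrightarrow> in_bot S r \<Longrightarrow> \<not> double_entry is r \<Longrightarrow>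
      G (i - 1) = Npre n k d (G r) \<Longrightarrow> G i = Npre n k (d + 1) (G (r - 1))"
    and "i \<in> set is \<Longrightarrow> in_top S i \<Longrightarrow> in_top S (i - 1) \<Longrightarrow> j < n - 2 * k \<Longrightarrow>
      G (i - 1) = Npre n k d (Nim n k (n - k - j)) \<Longrightarrow> G i = Npre n k d (Nim n k (n - k - j - 1))"
  using assms unfolding fung_flags_def by blast+

lemma Ycomp_Springer: "F \<in> Ycomp n k \<sigma> \<Longrightarrow> F \<in> Springer n k"
  unfolding Ycomp_def by blast

lemma YcompD:
  assumes "F \<in> Ycomp n k \<sigma>" and "i \<in> {1..n}"
  shows "F i \<subseteq> Npre n k 1 (F (i - 1))"
    and "in_top \<sigma> i \<Longrightarrow> in_bot \<sigma> (i - 1) \<Longrightarrow> F i = Npre n k 1 (F (i - 2))"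
    and "in_top \<sigma> i \<Longrightarrow> in_top \<sigma> (i - 1) \<Longrightarrow> in_bot \<sigma> r \<Longrightarrow>
      F (i - 1) = Npre n k d (F r) \<Longrightarrow> F i = Npre n k (d + 1) (F (r - 1))"
    and "in_top \<sigma> i \<Longrightarrow> in_top \<sigma> (i - 1) \<Longrightarrow> j < n - 2 * k \<Longrightarrow>
      F (i - 1) = Npre n k d (Nim n k (n - k - j)) \<Longrightarrow> F i = Npre n k d (Nim n k (n - k - j - 1))"
  using assms unfolding Ycomp_def by blast+

lemma in_bot_phi_simple: "in_bot S x \<Longrightarrow> \<not> double_entry is x \<Longrightarrow> in_bot (phi is S) x"
  by (subst in_bot_phi) (force simp: in_bot_def)

lemma in_bot_phi_double: "x \<in> set (snd S) \<Longrightarrow> double_entry is x \<Longrightarrow> in_bot (phi is S) (x - 1)"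
  by (subst in_bot_phi) force

context standard_tableau
begin

lemma n_minus_k_pos: "0 < n - k"
  using two_k_le_n valid_type_entry(1)[OF valid last_in_type[OF valid]] by linarith

lemma double_entry_in_both_rows:
  assumes "double_entry is x"
  shows "x \<in> set (fst S)" and "x \<in> set (snd S)"
  using entry_gap[OF double_entryD(1)[OF assms]] assms unfolding double_entry_def
  by (auto simp: of_bool_def split: if_splits)

lemma index_cases:
  assumes "j \<in> {1..n}"
  obtains (simple) "j \<in> set is" "\<not> double_entry is j" "j - 1 \<in> insert 0 (set is)"
    | (double) "double_entry is j"
    | (missing) "double_entry is (Suc j)"
  using prevt_simple_entry[of j] prevt_in_type[of "is" j] double_entry_Suc_if_missing[OF assms]
  by (cases "j \<in> set is"; cases "double_entry is j") auto

lemma entry_in_range: "i \<in> set is \<Longrightarrow> i \<in> {1..n}"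
  using valid_type_entry[OF valid] by (simp add: Suc_leI)

lemma pr_Ycomp_N_step:
  assumes F: "F \<in> Ycomp n k (phi is S)" and i: "i \<in> set is"
  shows "pr is F i \<subseteq> Npre n k 1 (pr is F (prevt is i))"
proof (cases "double_entry is i")
  case True
  note D = double_entryD[OF True]
  have "in_top (phi is S) i" "in_bot (phi is S) (i - 1)"
    using double_entry_in_both_rows[OF True] in_bot_phi_double[OF _ True]
    by (auto simp: in_top_def phi_def)
  then show ?thesis using YcompD(2)[OF F entry_in_range[OF i]] D pr_eq[OF D(4)] pr_eq[of i] by simp
next
  case False
  have "prevt is i = i - 1" using prevt_simple_entry[OF i False] .
  moreover have "i - 1 \<in> insert 0 (set is)" using calculation prevt_in_type[of "is" i] by simp
  ultimately show ?thesis
    using YcompD(1)[OF F entry_in_range[OF i]] pr_eq[of i] pr_eq[of "i - 1"] i by simp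
qed

lemma pr_Ycomp_bot_step:
  assumes F: "F \<in> Ycomp n k (phi is S)" and i: "i \<in> set is"
    and h: "in_top S i" "in_bot S (i - 1)" "\<not> double_entry is (i - 1)"
  shows "pr is F i = Npre n k 1 (pr is F (i - 2))"
proof -
  have "i - 2 \<in> insert 0 (set is)"
    using prevt_simple_entry[OF in_bot_in_type[OF h(2)] h(3)] prevt_in_type[of "is" "i - 1"]
    by (simp add: numeral_2_eq_2)
  then show ?thesis
    using YcompD(2)[OF F entry_in_range[OF i]] h in_bot_phi_simple pr_eq[of i] pr_eq[of "i - 2"] i
    by simp
qed

lemma pr_Ycomp_top_step:
  assumes F: "F \<in> Ycomp n k (phi is S)" and i: "i \<in> set is"
    and h: "in_top S i" "in_top S (i - 1)" "in_bot S r" "\<not> double_entry is r"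
    and eq: "pr is F (i - 1) = Npre n k d (pr is F r)"
  shows "pr is F i = Npre n k (d + 1) (pr is F (r - 1))"
proof -
  have "r \<in> set is" "r - 1 \<in> insert 0 (set is)"
    using in_bot_in_type[OF h(3)] prevt_simple_entry[OF in_bot_in_type[OF h(3)] h(4)]
      prevt_in_type[of "is" r] by auto
  then show ?thesis
    using YcompD(3)[OF F entry_in_range[OF i]] h in_bot_phi_simple eq in_top_in_type[OF h(2)]
      pr_eq[of _ "is" F] i
    by simp
qed

lemma pr_Ycomp_top_step_im:
  assumes F: "F \<in> Ycomp n k (phi is S)" and i: "i \<in> set is"
    and h: "in_top S i" "in_top S (i - 1)" and "j < n - 2 * k"
    and "pr is F (i - 1) = Npre n k d (Nim n k (n - k - j))"
  shows "pr is F i = Npre n k d (Nim n k (n - k - j - 1))"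
  using assms YcompD(4)[OF F entry_in_range[OF i]] in_top_in_type[OF h(2)] pr_eq[of _ "is" F] by simp

lemma pr_Ycomp_in_fung_flags:
  assumes F: "F \<in> Ycomp n k (phi is S)"
  shows "pr is F \<in> fung_flags n k is S"
  unfolding fung_flags_def
proof (intro CollectI conjI ballI impI allI)
  show "pflag n is (pr is F)" by (rule pflag_pr_Springer[OF valid Ycomp_Springer[OF F]])
next
  fix i assume "i \<in> set is"
  then show "pr is F i \<subseteq> Npre n k 1 (pr is F (prevt is i))" by (rule pr_Ycomp_N_step[OF F])
next
  fix i assume "i \<in> set is" and "in_top S i \<and> in_bot S (i - 1) \<and> \<not> double_entry is (i - 1)"
  then show "pr is F i = Npre n k 1 (pr is F (i - 2))" using pr_Ycomp_bot_step[OF F] by blast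
next
  fix i d r assume "i \<in> set is" and "in_top S i \<and> in_top S (i - 1)"
    and "in_bot S r \<and> \<not> double_entry is r \<and> pr is F (i - 1) = Npre n k d (pr is F r)"
  then show "pr is F i = Npre n k (d + 1) (pr is F (r - 1))" using pr_Ycomp_top_step[OF F] by blast
next
  fix i d j assume "i \<in> set is" and "in_top S i \<and> in_top S (i - 1)"
    and "j < n - 2 * k \<and> pr is F (i - 1) = Npre n k d (Nim n k (n - k - j))"
  then show "pr is F i = Npre n k d (Nim n k (n - k - j - 1))" using pr_Ycomp_top_step_im[OF F] by blast
qed

lemma fung_flags_double_entry:
  assumes G: "G \<in> fung_flags n k is S" and x: "double_entry is x"
  shows "G x = Npre n k 1 (G (x - 2))"
proof -
  note D = double_entryD[OF x]
  have pf: "pflag n is G" using fung_flagsD(1)[OF G] .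
  have "G x \<subseteq> Npre n k 1 (G (x - 2))" using fung_flagsD(2)[OF G D(1)] D(3) by simp
  moreover have "V.dim (Npre n k 1 (G (x - 2))) \<le> V.dim (G x)"
    using dim_Npre1_le[OF pflag_dims(2)[OF pf D(4)] n_minus_k_pos]
      pflag_dims(3)[OF pf D(4)] pflag_dims(3)[of n "is" G x] pf D(1,2) by simp
  ultimately show ?thesis
    using subspace_eq_if_dim_le[OF pflag_dims(1)[of n "is" G x] _ Npre_Vsp] pf D(1) by simp
qed

lemma fung_flags_top_pair:
  assumes G: "G \<in> fung_flags n k is S" and i: "i \<in> set is" "in_top S (i - 1)"
  shows "V.subspace (G i) \<and> G (i - 1) \<subset> G i \<and> G i \<subseteq> Npre n k 1 (G (i - 1))"
proof -
  have pf: "pflag n is G" using fung_flagsD(1)[OF G] .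
  have p: "prevt is i = i - 1" using prevt_simple_entry[OF i(1) not_double_if_pred_in_top[OF i(2)]] .
  then have "i - 1 \<in> insert 0 (set is)" using prevt_in_type[of "is" i] by simp
  then have "V.dim (G (i - 1)) \<noteq> V.dim (G i)"
    using pflag_dims(3)[OF pf] i(1) valid_type_entry(1)[OF valid i(1)] by simp
  then show ?thesis
    using pflag_dims(1)[OF pf] pflag_prevt_subset[OF pf i(1)] fung_flagsD(2)[OF G i(1)] i(1) p by auto
qed

lemma exists_filler:
  assumes G: "G \<in> fung_flags n k is S" and x: "double_entry is x"
  obtains X where "V.subspace X" "G (x - 2) \<subseteq> X" "X \<subseteq> G x" "V.dim X = x - 1"
    "\<And>i d. i \<in> set is \<Longrightarrow> in_top S i \<Longrightarrow> in_top S (i - 1) \<Longrightarrow>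
      G (i - 1) = Npre n k d X \<Longrightarrow> G i = Npre n k (Suc d) (G (x - 2))"
proof -
  note D = double_entryD[OF x]
  have pf: "pflag n is G" using fung_flagsD(1)[OF G] .
  have B: "G x = Npre n k 1 (G (x - 2))" using fung_flags_double_entry[OF G x] .
  have A: "V.subspace (G (x - 2))" "G (x - 2) \<subseteq> Vsp n" "V.dim (G (x - 2)) = x - 2"
    using pflag_dims[OF pf D(4)] by auto
  have A_B: "G (x - 2) \<subseteq> Npre n k 1 (G (x - 2))" using pflag_prevt_subset[OF pf D(1)] D(3) B by simp
  have "V.dim (G x) = x" using pflag_dims(3)[OF pf] D(1) by simp
  then have dim_B: "V.dim (Npre n k 1 (G (x - 2))) = V.dim (G (x - 2)) + 2" using D(2) A(3) B by simp
  define I where "I = {i \<in> set is. in_top S i \<and> in_top S (i - 1)}"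
  have fin: "finite I" unfolding I_def by simp
  have H: "\<And>i. i \<in> I \<Longrightarrow> V.subspace (G i) \<and> G (i - 1) \<subset> G i \<and> G i \<subseteq> Npre n k 1 (G (i - 1))"
    using fung_flags_top_pair[OF G] unfolding I_def by blast
  obtain X where X: "V.subspace X" "G (x - 2) \<subseteq> X" "X \<subseteq> Npre n k 1 (G (x - 2))"
      "V.dim X = V.dim (G (x - 2)) + 1"
    and gen: "\<And>i d. i \<in> I \<Longrightarrow> G (i - 1) = Npre n k d X \<Longrightarrow> G i = Npre n k (Suc d) (G (x - 2))"
    using generic_intermediate_subspace[where H = "\<lambda>i. G (i - 1)" and H' = "\<lambda>i. G i",
        OF A(1,2) A_B dim_B fin H] by blast
  show thesis
  proof (rule that[OF X(1,2)])
    show "X \<subseteq> G x" using X(3) B by simp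
    show "V.dim X = x - 1" using X(4) A(3) D(2) by simp
    show "G i = Npre n k (Suc d) (G (x - 2))"
      if "i \<in> set is" "in_top S i" "in_top S (i - 1)" "G (i - 1) = Npre n k d X" for i d
      using gen[of i d] that unfolding I_def by blast
  qed
qed

lemma exists_fillers:
  assumes G: "G \<in> fung_flags n k is S"
  obtains X where
    "\<And>x. double_entry is x \<Longrightarrow> V.subspace (X x) \<and> G (x - 2) \<subseteq> X x \<and> X x \<subseteq> G x \<and> V.dim (X x) = x - 1"
    "\<And>x i d. double_entry is x \<Longrightarrow> i \<in> set is \<Longrightarrow> in_top S i \<Longrightarrow> in_top S (i - 1) \<Longrightarrow>
      G (i - 1) = Npre n k d (X x) \<Longrightarrow> G i = Npre n k (Suc d) (G (x - 2))"
proof -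
  define good where "good x X \<longleftrightarrow>
      (V.subspace X \<and> G (x - 2) \<subseteq> X \<and> X \<subseteq> G x \<and> V.dim X = x - 1) \<and>
      (\<forall>i d. i \<in> set is \<and> in_top S i \<and> in_top S (i - 1) \<and> G (i - 1) = Npre n k d X \<longrightarrow>
        G i = Npre n k (Suc d) (G (x - 2)))" for x X
  have "\<exists>X. double_entry is x \<longrightarrow> good x X" for x
  proof (cases "double_entry is x")
    case True
    obtain X where "V.subspace X" "G (x - 2) \<subseteq> X" "X \<subseteq> G x" "V.dim X = x - 1"
      "\<And>i d. i \<in> set is \<Longrightarrow> in_top S i \<Longrightarrow> in_top S (i - 1) \<Longrightarrow>
        G (i - 1) = Npre n k d X \<Longrightarrow> G i = Npre n k (Suc d) (G (x - 2))"
      using exists_filler[OF G True] by blast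
    then have "good x X" unfolding good_def by blast
    then show ?thesis by blast
  qed simp
  then obtain X where "\<forall>x. double_entry is x \<longrightarrow> good x (X x)"
    using choice[of "\<lambda>x X. double_entry is x \<longrightarrow> good x X"] by blast
  then have X: "good x (X x)" if "double_entry is x" for x using that by blast
  show thesis
  proof (rule that)
    show "V.subspace (X x) \<and> G (x - 2) \<subseteq> X x \<and> X x \<subseteq> G x \<and> V.dim (X x) = x - 1"
      if "double_entry is x" for x
      using X[OF that] unfolding good_def by blast
    show "G i = Npre n k (Suc d) (G (x - 2))"
      if "double_entry is x" "i \<in> set is" "in_top S i" "in_top S (i - 1)" "G (i - 1) = Npre n k d (X x)"
      for x i d
      using X[OF that(1)] that(2-5) unfolding good_def by blast
  qed
qed

end

section \<open>Completing a partial flag to a full flag\<close>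

locale flag_completion = standard_tableau +
  fixes G X :: "nat \<Rightarrow> vec set"
  assumes G: "G \<in> fung_flags n k is S"
    and filler: "\<And>x. double_entry is x \<Longrightarrow>
      V.subspace (X x) \<and> G (x - 2) \<subseteq> X x \<and> X x \<subseteq> G x \<and> V.dim (X x) = x - 1"
    and filler_generic: "\<And>x i d. double_entry is x \<Longrightarrow> i \<in> set is \<Longrightarrow> in_top S i \<Longrightarrow>
      in_top S (i - 1) \<Longrightarrow> G (i - 1) = Npre n k d (X x) \<Longrightarrow> G i = Npre n k (Suc d) (G (x - 2))"
begin

text \<open>An index \<open>j \<le> n\<close> missing from the type is \<open>x - 1\<close> for a double entry \<open>x\<close>
  (\<open>double_entry_Suc_if_missing\<close>), and the filler \<open>X x\<close> is taken as \<open>F\<^sub>j\<close>.\<close>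

definition completed :: "nat \<Rightarrow> vec set" where
  "completed j = (if j \<in> insert 0 (set is) then G j else if j \<le> n then X (Suc j) else {})"

lemma pflag_G: "pflag n is G"
  using fung_flagsD(1)[OF G] .

lemma completed_eq: "j \<in> insert 0 (set is) \<Longrightarrow> completed j = G j"
  unfolding completed_def by simp

lemma completed_double: "double_entry is x \<Longrightarrow> completed (x - 1) = X x"
  using double_entryD[of "is" x] valid_type_entry(2)[OF valid, of x] unfolding completed_def by auto

lemma completed_missing: "double_entry is (Suc j) \<Longrightarrow> completed j = X (Suc j)"
  using completed_double by fastforce

lemma completed_subspace:
  assumes "j \<in> {1..n}"
  shows "is_subspace n (completed j) \<and> sdim (completed j) = j"
  using assms
proof (cases rule: index_cases)
  case missing
  note D = double_entryD[OF missing]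
  have "X (Suc j) \<subseteq> Vsp n" using filler[OF missing] pflag_dims(2)[OF pflag_G] D(1) by blast
  then show ?thesis
    using filler[OF missing] completed_missing[OF missing] unfolding is_subspace_iff sdim_eq_dim by simp
qed (use pflag_G completed_eq in \<open>auto simp: pflag_def dest: double_entryD(1)\<close>)

lemma completed_mono:
  assumes "j \<in> {1..n}"
  shows "completed (j - 1) \<subseteq> completed j"
  using assms
proof (cases rule: index_cases)
  case simple
  then show ?thesis
    using pflag_prevt_subset[OF pflag_G simple(1)] prevt_simple_entry[OF simple(1,2)] completed_eq by simp
next
  case double
  then show ?thesis using filler completed_double completed_eq double_entryD(1) by simp
next
  case missing
  then show ?thesis
    using filler[OF missing] completed_missing[OF missing] completed_eq double_entryD(4)[OF missing]
    by (simp add: numeral_2_eq_2)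
qed

lemma completed_N_step:
  assumes "j \<in> {1..n}"
  shows "completed j \<subseteq> Npre n k 1 (completed (j - 1))"
  using assms
proof (cases rule: index_cases)
  case simple
  then show ?thesis
    using fung_flagsD(2)[OF G simple(1)] prevt_simple_entry[OF simple(1,2)] completed_eq by simp
next
  case double
  note D = double_entryD[OF double]
  have "G j \<subseteq> Npre n k 1 (G (j - 2))" using fung_flagsD(2)[OF G D(1)] D(3) by simp
  also have "\<dots> \<subseteq> Npre n k 1 (X j)" using Npre_mono filler[OF double] by blast
  finally show ?thesis using completed_eq D(1) completed_double[OF double] by simp
next
  case missing
  note D = double_entryD[OF missing]
  have "X (Suc j) \<subseteq> G (Suc j)" using filler[OF missing] by blast
  also have "\<dots> \<subseteq> Npre n k 1 (G (j - 1))" using fung_flagsD(2)[OF G D(1)] D(3) by simp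
  finally show ?thesis using completed_missing[OF missing] completed_eq D(4) by simp
qed

lemma completed_Springer: "completed \<in> Springer n k"
  unfolding Springer_def Sp_def pflag_def N_invariant_def
proof (intro CollectI conjI ballI allI impI)
  show "completed 0 = {0}" using completed_eq pflag_G unfolding pflag_def by simp
next
  fix j assume "j \<in> set (full_type n)"
  then have j: "j \<in> {1..n}" by (simp add: set_full_type)
  show "is_subspace n (completed j)" "sdim (completed j) = j" using completed_subspace[OF j] by auto
  show "completed (prevt (full_type n) j) \<subseteq> completed j"
    using completed_mono[OF j] prevt_full_type[OF j] by simp
  show "Nop n k ` completed j \<subseteq> completed (prevt (full_type n) j)"
    using completed_N_step[OF j] prevt_full_type[OF j] unfolding Npre_def by auto
next
  fix j assume "j \<notin> insert 0 (set (full_type n))"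
  then have "n < j" by (auto simp: set_full_type)
  moreover have "j \<notin> set is" using calculation valid_type_entry(2)[OF valid] by force
  ultimately show "completed j = {}" unfolding completed_def by simp
qed

lemma completed_bot_step:
  assumes i: "i \<in> {1..n}" and h: "in_top (phi is S) i" "in_bot (phi is S) (i - 1)"
  shows "completed i = Npre n k 1 (completed (i - 2))"
proof -
  have "in_top S i" using h(1) by simp
  then have i_is: "i \<in> set is" using in_top_in_type i by force
  obtain x where x: "x \<in> set (snd S)" "i - 1 = (if double_entry is x then x - 1 else x)"
    using h(2) unfolding in_bot_phi by blast
  show ?thesis
  proof (cases "double_entry is x")
    case False
    then have bot: "in_bot S (i - 1)" "\<not> double_entry is (i - 1)" using x unfolding in_bot_def by auto
    then have "i - 2 \<in> insert 0 (set is)"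
      using prevt_simple_entry[OF in_bot_in_type[OF bot(1)] bot(2)] prevt_in_type[of "is" "i - 1"]
      by (simp add: numeral_2_eq_2)
    then show ?thesis
      using fung_flagsD(3)[OF G i_is _ bot] h(1) completed_eq i_is by simp
  next
    case True
    note D = double_entryD[OF True]
    have "i = x" using x(2) True D(2) i by simp
    then show ?thesis using fung_flags_double_entry[OF G True] D(4) completed_eq i_is by simp
  qed
qed

lemma completed_top_step:
  assumes i: "i \<in> {1..n}" and h: "in_top (phi is S) i" "in_top (phi is S) (i - 1)"
    and r: "in_bot (phi is S) r" and eq: "completed (i - 1) = Npre n k d (completed r)"
  shows "completed i = Npre n k (d + 1) (completed (r - 1))"
proof -
  have top: "in_top S i" "in_top S (i - 1)" using h by auto
  have i_is: "i \<in> set is" using top(1) in_top_in_type i by force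
  have i1: "i - 1 \<in> insert 0 (set is)" using in_top_in_type[OF top(2)] .
  obtain x where x: "x \<in> set (snd S)" "r = (if double_entry is x then x - 1 else x)"
    using r unfolding in_bot_phi by blast
  show ?thesis
  proof (cases "double_entry is x")
    case False
    then have bot: "in_bot S r" "\<not> double_entry is r" using x unfolding in_bot_def by auto
    have r_is: "r \<in> set is" "r - 1 \<in> insert 0 (set is)"
      using in_bot_in_type[OF bot(1)] prevt_simple_entry[OF in_bot_in_type[OF bot(1)] bot(2)]
        prevt_in_type[of "is" r] by auto
    then show ?thesis
      using fung_flagsD(4)[OF G i_is top bot] eq completed_eq i_is i1 by simp
  next
    case True
    note D = double_entryD[OF True]
    have "r = x - 1" "r - 1 = x - 2" using x(2) True by auto
    then have "G (i - 1) = Npre n k d (X x)" using eq completed_eq[OF i1] completed_double[OF True] by simp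
    then show ?thesis
      using filler_generic[OF True i_is top] completed_eq i_is D(4) \<open>r - 1 = x - 2\<close> by simp
  qed
qed

lemma completed_top_step_im:
  assumes i: "i \<in> {1..n}" and h: "in_top (phi is S) i" "in_top (phi is S) (i - 1)"
    and "j < n - 2 * k" and "completed (i - 1) = Npre n k d (Nim n k (n - k - j))"
  shows "completed i = Npre n k d (Nim n k (n - k - j - 1))"
proof -
  have top: "in_top S i" "in_top S (i - 1)" using h by auto
  have "i \<in> set is" using top(1) in_top_in_type i by force
  then show ?thesis
    using fung_flagsD(5)[OF G _ top] assms(4,5) completed_eq in_top_in_type[OF top(2)] by simp
qed

lemma completed_Ycomp: "completed \<in> Ycomp n k (phi is S)"
  unfolding Ycomp_def
proof (intro CollectI conjI ballI impI allI completed_Springer)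
  fix i assume i: "i \<in> {1..n}"
  show "completed i \<subseteq> Npre n k 1 (completed (i - 1))" by (rule completed_N_step[OF i])
next
  fix i assume "i \<in> {1..n}" and "in_top (phi is S) i \<and> in_bot (phi is S) (i - 1)"
  then show "completed i = Npre n k 1 (completed (i - 2))" using completed_bot_step by blast
next
  fix i d r assume "i \<in> {1..n}" and "in_top (phi is S) i \<and> in_top (phi is S) (i - 1)"
    and "in_bot (phi is S) r \<and> completed (i - 1) = Npre n k d (completed r)"
  then show "completed i = Npre n k (d + 1) (completed (r - 1))" using completed_top_step by blast
next
  fix i d j assume "i \<in> {1..n}" and "in_top (phi is S) i \<and> in_top (phi is S) (i - 1)"
    and "j < n - 2 * k \<and> completed (i - 1) = Npre n k d (Nim n k (n - k - j))"
  then show "completed i = Npre n k d (Nim n k (n - k - j - 1))" using completed_top_step_im by blast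
qed

lemma pr_completed: "pr is completed = G"
proof
  fix j
  show "pr is completed j = G j"
    using pr_eq[of j "is" completed] completed_eq pflag_junk[OF pflag_G, of j] unfolding pr_def by auto
qed

end

lemma (in standard_tableau) fung_flags_subset_pr_Ycomp:
  assumes G: "G \<in> fung_flags n k is S"
  shows "G \<in> pr is ` Ycomp n k (phi is S)"
proof -
  obtain X where
    "\<And>x. double_entry is x \<Longrightarrow> V.subspace (X x) \<and> G (x - 2) \<subseteq> X x \<and> X x \<subseteq> G x \<and> V.dim (X x) = x - 1"
    "\<And>x i d. double_entry is x \<Longrightarrow> i \<in> set is \<Longrightarrow> in_top S i \<Longrightarrow> in_top S (i - 1) \<Longrightarrow>
      G (i - 1) = Npre n k d (X x) \<Longrightarrow> G i = Npre n k (Suc d) (G (x - 2))"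
    using exists_fillers[OF G] by blast
  then interpret flag_completion n k "is" S G X
    using G by unfold_locales auto
  show ?thesis using completed_Ycomp pr_completed by (metis image_eqI)
qed

theorem theorem4p7:
  fixes n k :: nat and "is" :: "nat list" and S :: tableau
  assumes "2 * k \<le> n"
    and "valid_type n is"
    and "is_tableau n k is S"
    and "standard_tab S"
  shows "pr is ` Ycomp n k (phi is S) =
    {G. pflag n is G \<and>
        (\<forall>i\<in>set is. G i \<subseteq> Npre n k 1 (G (prevt is i))) \<and>
        (\<forall>i\<in>set is. in_top S i \<and> in_bot S (i - 1) \<and> \<not> double_entry is (i - 1) \<longrightarrow>
             G i = Npre n k 1 (G (i - 2))) \<and>
        (\<forall>i\<in>set is. in_top S i \<and> in_top S (i - 1) \<longrightarrow>
             (\<forall>d r. in_bot S r \<and> \<not> double_entry is r \<and> G (i - 1) = Npre n k d (G r) \<longrightarrow>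
                    G i = Npre n k (d + 1) (G (r - 1))) \<and>
             (\<forall>d j. j < n - 2 * k \<and> G (i - 1) = Npre n k d (Nim n k (n - k - j)) \<longrightarrow>
                    G i = Npre n k d (Nim n k (n - k - j - 1))))}"
proof -
  interpret standard_tableau n k "is" S
    using assms by unfold_locales
  have "pr is ` Ycomp n k (phi is S) = fung_flags n k is S"
    using pr_Ycomp_in_fung_flags fung_flags_subset_pr_Ycomp by blast
  then show ?thesis unfolding fung_flags_def .
qed

end
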